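(* Let $f:X\to Y$ be a surjective function between topological spaces. Then $f$ is $gSC^*$-closed if and only if for every subset $I\subseteq Y$ and every open set $M\subseteq X$ with $f^{-1}(I)\subseteq M$ there exists a $gSC^*$-open set $N\subseteq Y$ with $I\subseteq N$ and $f^{-1}(N)\subseteq M$. Likewise, $f$ is $SC^*$-$gSC^*$-closed if and only if for every subset $I\subseteq Y$ and every $SC^*$-open set $M\subseteq X$ with $f^{-1}(I)\subseteq M$ there exists a $gSC^*$-open set $N\subseteq Y$ with $I\subseteq N$ and $f^{-1}(N)\subseteq M$.
   Context: For $A\subseteq Z$ in a topological space $Z$: $A$ is semi-open if $A\subseteq cl(int(A))$, semi-closed if its complement is semi-open; $scl(A)$ is the smallest semi-closed set containing $A$. $A$ is $c^*$-open if $int(cl(A))\subseteq A\subseteq cl(int(A))$. $A$ is $SC^*$-closed if $scl(A)\subseteq U$ whenever $A\subseteq U$ and $U$ is $c^*$-open; $A$ is $SC^*$-open if $Z\setminus A$ is $SC^*$-closed. $SC^*\text{-}cl(A)$ is the intersection of all $SC^*$-closed sets containing $A$. $A$ is $gSC^*$-closed if $SC^*\text{-}cl(A)\subseteq U$ whenever $A\subseteq U$ and $U$ is open; $A$ is $gSC^*$-open if its complement is $gSC^*$-closed. $f$ is $gSC^*$-closed if $f(J)$ is $gSC^*$-closed in $Y$ for every closed $J\subseteq X$; $f$ is $SC^*$-$gSC^*$-closed if $f(J)$ is $gSC^*$-closed in $Y$ for every $SC^*$-closed $J\subseteq X$. *)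

theory Defs
  imports "HOL-Analysis.Analysis"
begin

definition semi_open :: "'a topology \<Rightarrow> 'a set \<Rightarrow> bool" where
  "semi_open T A \<longleftrightarrow> A \<subseteq> topspace T \<and> A \<subseteq> T closure_of (T interior_of A)"

definition semi_closed :: "'a topology \<Rightarrow> 'a set \<Rightarrow> bool" where
  "semi_closed T A \<longleftrightarrow> A \<subseteq> topspace T \<and> semi_open T (topspace T - A)"

definition scl :: "'a topology \<Rightarrow> 'a set \<Rightarrow> 'a set" where
  "scl T A = topspace T \<inter> \<Inter> {S. semi_closed T S \<and> A \<subseteq> S}"

definition c_star_open :: "'a topology \<Rightarrow> 'a set \<Rightarrow> bool" where
  "c_star_open T A \<longleftrightarrow> A \<subseteq> topspace T \<and>
     T interior_of (T closure_of A) \<subseteq> A \<and> A \<subseteq> T closure_of (T interior_of A)"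

definition SC_star_closed :: "'a topology \<Rightarrow> 'a set \<Rightarrow> bool" where
  "SC_star_closed T A \<longleftrightarrow> A \<subseteq> topspace T \<and>
     (\<forall>U. c_star_open T U \<and> A \<subseteq> U \<longrightarrow> scl T A \<subseteq> U)"

definition SC_star_open :: "'a topology \<Rightarrow> 'a set \<Rightarrow> bool" where
  "SC_star_open T A \<longleftrightarrow> A \<subseteq> topspace T \<and> SC_star_closed T (topspace T - A)"

definition SC_star_cl :: "'a topology \<Rightarrow> 'a set \<Rightarrow> 'a set" where
  "SC_star_cl T A = topspace T \<inter> \<Inter> {S. SC_star_closed T S \<and> A \<subseteq> S}"

definition gSC_star_closed :: "'a topology \<Rightarrow> 'a set \<Rightarrow> bool" where
  "gSC_star_closed T A \<longleftrightarrow> A \<subseteq> topspace T \<and>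
     (\<forall>U. openin T U \<and> A \<subseteq> U \<longrightarrow> SC_star_cl T A \<subseteq> U)"

definition gSC_star_open :: "'a topology \<Rightarrow> 'a set \<Rightarrow> bool" where
  "gSC_star_open T A \<longleftrightarrow> A \<subseteq> topspace T \<and> gSC_star_closed T (topspace T - A)"

definition gSC_star_closed_map :: "'a topology \<Rightarrow> 'b topology \<Rightarrow> ('a \<Rightarrow> 'b) \<Rightarrow> bool" where
  "gSC_star_closed_map X Y f \<longleftrightarrow> (\<forall>J. closedin X J \<longrightarrow> gSC_star_closed Y (f ` J))"

definition SC_gSC_closed_map :: "'a topology \<Rightarrow> 'b topology \<Rightarrow> ('a \<Rightarrow> 'b) \<Rightarrow> bool" where
  "SC_gSC_closed_map X Y f \<longleftrightarrow> (\<forall>J. SC_star_closed X J \<longrightarrow> gSC_star_closed Y (f ` J))"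

end

theory Submission
  imports Defs
begin

text \<open>Both equivalences are instances of one set-theoretic duality: for \<open>J \<subseteq> S\<close>, the set
  \<open>T - f ` J\<close> is the largest \<open>N \<subseteq> T\<close> whose preimage lies in \<open>S - J\<close>. So "images of the
  closed-type sets \<open>J\<close> are closed-type" is the same as "whenever the preimage of \<open>I\<close> lies in the
  open-type set \<open>S - J\<close>, an open-type \<open>N \<supseteq> I\<close> with the same property exists".\<close>

lemma image_closed_iff_vimage_nbhd:
  fixes f :: "'a \<Rightarrow> 'b"
  assumes f: "f ` S \<subseteq> T" and P_subset: "\<And>J. P J \<Longrightarrow> J \<subseteq> S"
  shows "(\<forall>J. P J \<longrightarrow> C (f ` J)) \<longleftrightarrow>
           (\<forall>I M. I \<subseteq> T \<and> (M \<subseteq> S \<and> P (S - M)) \<and> {x \<in> S. f x \<in> I} \<subseteq> M \<longrightarrow>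
              (\<exists>N. (N \<subseteq> T \<and> C (T - N)) \<and> I \<subseteq> N \<and> {x \<in> S. f x \<in> N} \<subseteq> M))"
    (is "?closed \<longleftrightarrow> ?nbhd")
proof
  assume closed: ?closed
  show ?nbhd
  proof (intro allI impI)
    fix I M
    assume IM: "I \<subseteq> T \<and> (M \<subseteq> S \<and> P (S - M)) \<and> {x \<in> S. f x \<in> I} \<subseteq> M"
    have "T - (T - f ` (S - M)) = f ` (S - M)"
      using f by blast
    with closed IM have "C (T - (T - f ` (S - M)))"
      by simp
    moreover have "I \<subseteq> T - f ` (S - M)" "{x \<in> S. f x \<in> T - f ` (S - M)} \<subseteq> M"
      using IM by blast+
    ultimately show "\<exists>N. (N \<subseteq> T \<and> C (T - N)) \<and> I \<subseteq> N \<and> {x \<in> S. f x \<in> N} \<subseteq> M"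
      by blast
  qed
next
  assume nbhd: ?nbhd
  show ?closed
  proof (intro allI impI)
    fix J
    assume "P J"
    moreover from this have J: "J \<subseteq> S"
      by (rule P_subset)
    moreover have "S - (S - J) = J"
      using J by blast
    moreover have "{x \<in> S. f x \<in> T - f ` J} \<subseteq> S - J"
      by blast
    ultimately obtain N where N: "N \<subseteq> T" "C (T - N)" "T - f ` J \<subseteq> N"
        "{x \<in> S. f x \<in> N} \<subseteq> S - J"
      using nbhd[rule_format, of "T - f ` J" "S - J"] by auto
    have "T - N = f ` J"
      using f J N by blast
    with N(2) show "C (f ` J)"
      by simp
  qed
qed

lemma SC_star_closed_subset: "SC_star_closed T A \<Longrightarrow> A \<subseteq> topspace T"
  by (simp add: SC_star_closed_def)

theorem theorem4p5:
  fixes X :: "'a topology" and Y :: "'b topology" and f :: "'a \<Rightarrow> 'b"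
  assumes surj: "f ` topspace X = topspace Y"
  shows "(gSC_star_closed_map X Y f \<longleftrightarrow>
           (\<forall>I M. I \<subseteq> topspace Y \<and> openin X M \<and> {x \<in> topspace X. f x \<in> I} \<subseteq> M \<longrightarrow>
              (\<exists>N. gSC_star_open Y N \<and> I \<subseteq> N \<and> {x \<in> topspace X. f x \<in> N} \<subseteq> M)))
       \<and> (SC_gSC_closed_map X Y f \<longleftrightarrow>
           (\<forall>I M. I \<subseteq> topspace Y \<and> SC_star_open X M \<and> {x \<in> topspace X. f x \<in> I} \<subseteq> M \<longrightarrow>
              (\<exists>N. gSC_star_open Y N \<and> I \<subseteq> N \<and> {x \<in> topspace X. f x \<in> N} \<subseteq> M)))"
proof -
  have f: "f ` topspace X \<subseteq> topspace Y"
    using surj by simp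
  show ?thesis
    unfolding gSC_star_closed_map_def SC_gSC_closed_map_def gSC_star_open_def
      SC_star_open_def openin_closedin_eq
    using image_closed_iff_vimage_nbhd[OF f closedin_subset]
      image_closed_iff_vimage_nbhd[OF f SC_star_closed_subset]
    by (rule conjI)
qed

end
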